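(* Let $\mathcal H=\mathcal H_A\otimes\mathcal H_B$ be finite-dimensional with $d=\dim\mathcal H$. Let $H_A(t_i),H_B(t_i),H_A(t_f),H_B(t_f)$ be local Hamiltonians with spectral decompositions $H_X(t_i)=\sum_{l_X}E^i_{l_X}\Pi^i_{l_X}$, $H_X(t_f)=\sum_{k_X}E^f_{k_X}\Pi^f_{k_X}$ ($X=A,B$), let $\Phi$ be a CPTP map on $\mathcal H$ and $\beta>0$. Let $\gamma^X_{\beta,i}=e^{-\beta H_X(t_i)}/\mathcal Z^X_{\beta,i}$, $\gamma^X_{\beta,f}=e^{-\beta H_X(t_f)}/\mathcal Z^X_{\beta,f}$, $\gamma_{\beta,i}=\gamma^A_{\beta,i}\otimes\gamma^B_{\beta,i}$, $\gamma_{\beta,f}=\gamma^A_{\beta,f}\otimes\gamma^B_{\beta,f}$, and $\Delta F=-\beta^{-1}\ln\big(\mathcal Z^A_{\beta,f}\mathcal Z^B_{\beta,f}/(\mathcal Z^A_{\beta,i}\mathcal Z^B_{\beta,i})\big)$. Suppose the initial state is $\rho_i=\gamma^A_{\beta,i}\otimes\gamma^B_{\beta,i}+\mathfrak E_{AB}$ with $\mathfrak E_{AB}$ a Hermitian operator satisfying $\mathrm{Tr}_A\mathfrak E_{AB}=\mathrm{Tr}_B\mathfrak E_{AB}=0$. Then the bipartite EPM average satisfies $$\big\langle e^{-\beta(\Delta E-\Delta F)}\big\rangle=\Big\{d+\mathrm{Tr}\big(\gamma_{\beta,i}^{-1}\mathfrak E_{AB}\big)\Big\}\Big\{\mathrm{Tr}\big(\gamma_{\beta,f}\Phi[\gamma_{\beta,i}]\big)+\mathrm{Tr}\big(\gamma_{\beta,f}\Phi[\mathfrak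 E_{AB}]\big)\Big\}.$$
   Context: Bipartite EPM statistics: with $\mathbf l=(l_A,l_B)$, $\mathbf k=(k_A,k_B)$, the joint distribution is $p^{\mathbf l,\mathbf k}=\mathrm{Tr}(\rho_i\,\Pi^i_{l_A}\otimes\Pi^i_{l_B})\,\mathrm{Tr}(\Phi[\rho_i]\,\Pi^f_{k_A}\otimes\Pi^f_{k_B})$, the energy change is $\Delta E_{\mathbf l,\mathbf k}=E^f_{k_A}+E^f_{k_B}-E^i_{l_A}-E^i_{l_B}$, and $\langle g(\Delta E)\rangle=\sum_{\mathbf l,\mathbf k}p^{\mathbf l,\mathbf k}g(\Delta E_{\mathbf l,\mathbf k})$. $\Phi$ is extended linearly to non-positive operators. *)

theory Defs
  imports Complex_Main "Jordan_Normal_Form.Matrix"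
begin

text \<open>Complex matrices (Jordan_Normal_Form). Tensor product convention:
  basis index of H_A (x) H_B is i*dB + j, with i < dA, j < dB.\<close>

definition mtrace :: "complex mat \<Rightarrow> complex" where
  "mtrace A = (\<Sum>i<dim_row A. A $$ (i,i))"

definition hermitian :: "complex mat \<Rightarrow> bool" where
  "hermitian A \<longleftrightarrow> square_mat A \<and>
     (\<forall>i<dim_row A. \<forall>j<dim_row A. A $$ (i,j) = cnj (A $$ (j,i)))"

definition psd :: "complex mat \<Rightarrow> bool" where
  "psd A \<longleftrightarrow> hermitian A \<and>
     (\<forall>v. let q = (\<Sum>i<dim_row A. \<Sum>j<dim_row A. cnj (v i) * A $$ (i,j) * v j)
          in Im q = 0 \<and> Re q \<ge> 0)"

definition kron :: "complex mat \<Rightarrow> complex mat \<Rightarrow> complex mat" where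
  "kron A B = mat (dim_row A * dim_row B) (dim_col A * dim_col B)
     (\<lambda>(i,j). A $$ (i div dim_row B, j div dim_col B) * B $$ (i mod dim_row B, j mod dim_col B))"

definition ptrace_A :: "nat \<Rightarrow> nat \<Rightarrow> complex mat \<Rightarrow> complex mat" where
  "ptrace_A dA dB E = mat dB dB (\<lambda>(j,j'). \<Sum>i<dA. E $$ (i*dB + j, i*dB + j'))"

definition ptrace_B :: "nat \<Rightarrow> nat \<Rightarrow> complex mat \<Rightarrow> complex mat" where
  "ptrace_B dA dB E = mat dA dA (\<lambda>(i,i'). \<Sum>j<dB. E $$ (i*dB + j, i'*dB + j))"

definition mat_exp :: "complex mat \<Rightarrow> complex mat" where
  "mat_exp A = mat (dim_row A) (dim_col A)
     (\<lambda>(i,j). (\<Sum>k. (A ^\<^sub>m k) $$ (i,j) / of_nat (fact k)))"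

definition minv :: "complex mat \<Rightarrow> complex mat" where
  "minv A = (SOME B. B \<in> carrier_mat (dim_row A) (dim_row A) \<and> inverts_mat A B \<and> inverts_mat B A)"

definition msum :: "nat \<Rightarrow> (nat \<Rightarrow> complex mat) \<Rightarrow> nat set \<Rightarrow> complex mat" where
  "msum n f I = mat n n (\<lambda>(i,j). \<Sum>l\<in>I. f l $$ (i,j))"

definition spectral_decomp :: "nat \<Rightarrow> complex mat \<Rightarrow> nat \<Rightarrow> (nat \<Rightarrow> real) \<Rightarrow> (nat \<Rightarrow> complex mat) \<Rightarrow> bool" where
  "spectral_decomp n H m E P \<longleftrightarrow>
     H \<in> carrier_mat n n \<and>
     (\<forall>l<m. P l \<in> carrier_mat n n \<and> hermitian (P l) \<and> P l * P l = P l \<and> P l \<noteq> 0\<^sub>m n n) \<and>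
     (\<forall>l<m. \<forall>l'<m. l \<noteq> l' \<longrightarrow> P l * P l' = 0\<^sub>m n n) \<and>
     msum n P {..<m} = 1\<^sub>m n \<and>
     inj_on E {..<m} \<and>
     H = msum n (\<lambda>l. complex_of_real (E l) \<cdot>\<^sub>m P l) {..<m}"

text \<open>block (a,b) of size d x d of a (k*d) x (k*d) matrix, and id_k (x) Phi\<close>
definition blk :: "nat \<Rightarrow> complex mat \<Rightarrow> nat \<Rightarrow> nat \<Rightarrow> complex mat" where
  "blk d X a b = mat d d (\<lambda>(p,q). X $$ (a*d + p, b*d + q))"

definition ampl :: "nat \<Rightarrow> nat \<Rightarrow> (complex mat \<Rightarrow> complex mat) \<Rightarrow> complex mat \<Rightarrow> complex mat" where
  "ampl d k \<Phi> X = mat (k*d) (k*d) (\<lambda>(i,j). \<Phi> (blk d X (i div d) (j div d)) $$ (i mod d, j mod d))"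

definition CPTP :: "nat \<Rightarrow> (complex mat \<Rightarrow> complex mat) \<Rightarrow> bool" where
  "CPTP d \<Phi> \<longleftrightarrow>
     (\<forall>X \<in> carrier_mat d d. \<Phi> X \<in> carrier_mat d d) \<and>
     (\<forall>X \<in> carrier_mat d d. \<forall>Y \<in> carrier_mat d d. \<forall>c.
         \<Phi> (c \<cdot>\<^sub>m X + Y) = c \<cdot>\<^sub>m \<Phi> X + \<Phi> Y) \<and>
     (\<forall>X \<in> carrier_mat d d. mtrace (\<Phi> X) = mtrace X) \<and>
     (\<forall>k. \<forall>X \<in> carrier_mat (k*d) (k*d). psd X \<longrightarrow> psd (ampl d k \<Phi> X))"

definition partition_fn :: "real \<Rightarrow> complex mat \<Rightarrow> real" where
  "partition_fn \<beta> H = Re (mtrace (mat_exp (complex_of_real (-\<beta>) \<cdot>\<^sub>m H)))"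

definition gibbs :: "real \<Rightarrow> complex mat \<Rightarrow> complex mat" where
  "gibbs \<beta> H = complex_of_real (1 / partition_fn \<beta> H) \<cdot>\<^sub>m mat_exp (complex_of_real (-\<beta>) \<cdot>\<^sub>m H)"

definition epm_avg ::
  "complex mat \<Rightarrow> (complex mat \<Rightarrow> complex mat) \<Rightarrow>
   nat \<Rightarrow> (nat \<Rightarrow> real) \<Rightarrow> (nat \<Rightarrow> complex mat) \<Rightarrow>
   nat \<Rightarrow> (nat \<Rightarrow> real) \<Rightarrow> (nat \<Rightarrow> complex mat) \<Rightarrow>
   nat \<Rightarrow> (nat \<Rightarrow> real) \<Rightarrow> (nat \<Rightarrow> complex mat) \<Rightarrow>
   nat \<Rightarrow> (nat \<Rightarrow> real) \<Rightarrow> (nat \<Rightarrow> complex mat) \<Rightarrow> (real \<Rightarrow> real) \<Rightarrow> complex" where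
  "epm_avg \<rho> \<Phi> miA EiA PiA miB EiB PiB mfA EfA PfA mfB EfB PfB g =
     (\<Sum>lA<miA. \<Sum>lB<miB. \<Sum>kA<mfA. \<Sum>kB<mfB.
        mtrace (\<rho> * kron (PiA lA) (PiB lB)) * mtrace (\<Phi> \<rho> * kron (PfA kA) (PfB kB))
        * complex_of_real (g (EfA kA + EfB kB - EiA lA - EiB lB)))"

end

theory Submission
  imports Defs
begin

(* For every pair of measurement outcomes the weight exp (-beta (Delta E - Delta F)) is the
   product of Z^A_i Z^B_i exp (beta (E^i_lA + E^i_lB)), which depends only on the initial outcomes,
   and exp (-beta (E^f_kA + E^f_kB)) / (Z^A_f Z^B_f), which depends only on the final ones.  The
   EPM average therefore factorises, and summing the projectors against these weights reassembles
   the spectral decompositions of gamma_i^-1 and gamma_f: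
     <exp (-beta (Delta E - Delta F))> = Tr (rho_i gamma_i^-1) Tr (Phi[rho_i] gamma_f).
   Substituting rho_i = gamma_i + E and using linearity of Phi and of the trace gives the claim. *)

lemma index_mult_mat_sum:
  assumes "A \<in> carrier_mat n k" "B \<in> carrier_mat k m" "i < n" "j < m"
  shows "(A * B) $$ (i,j) = (\<Sum>t<k. A $$ (i,t) * B $$ (t,j))"
  using assms by (auto simp: scalar_prod_def atLeast0LessThan)

lemma smult_one_mat: "1 \<cdot>\<^sub>m A = (A :: 'a :: monoid_mult mat)"
  by (intro eq_matI) auto

lemma mtrace_add:
  assumes "A \<in> carrier_mat n n" "B \<in> carrier_mat n n"
  shows "mtrace (A + B) = mtrace A + mtrace B"
  using assms by (simp add: mtrace_def sum.distrib)

lemma mtrace_one_mat: "mtrace (1\<^sub>m n) = of_nat n"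
  by (simp add: mtrace_def)

lemma mtrace_mult_eq_sum:
  assumes "A \<in> carrier_mat n n" "B \<in> carrier_mat n n"
  shows "mtrace (A * B) = (\<Sum>i<n. \<Sum>t<n. A $$ (i,t) * B $$ (t,i))"
proof -
  have "mtrace (A * B) = (\<Sum>i<n. (A * B) $$ (i,i))"
    using assms by (simp add: mtrace_def)
  also have "\<dots> = (\<Sum>i<n. \<Sum>t<n. A $$ (i,t) * B $$ (t,i))"
    using assms by (intro sum.cong refl index_mult_mat_sum) auto
  finally show ?thesis .
qed

lemma mtrace_mult_comm:
  assumes "A \<in> carrier_mat n n" "B \<in> carrier_mat n n"
  shows "mtrace (A * B) = mtrace (B * A)"
proof -
  have "mtrace (A * B) = (\<Sum>i<n. \<Sum>t<n. A $$ (i,t) * B $$ (t,i))"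
    using assms by (rule mtrace_mult_eq_sum)
  also have "\<dots> = (\<Sum>t<n. \<Sum>i<n. B $$ (t,i) * A $$ (i,t))"
    by (subst sum.swap) (simp add: mult.commute)
  also have "\<dots> = mtrace (B * A)"
    by (rule mtrace_mult_eq_sum[OF assms(2,1), symmetric])
  finally show ?thesis .
qed

lemma mtrace_add_mult:
  assumes "A \<in> carrier_mat n n" "B \<in> carrier_mat n n" "C \<in> carrier_mat n n"
  shows "mtrace ((A + B) * C) = mtrace (A * C) + mtrace (B * C)"
  using assms by (simp add: add_mult_distrib_mat mtrace_add[of _ n])

lemma mtrace_mult_lincomb:
  assumes X: "X \<in> carrier_mat n n" and Y: "\<forall>l\<in>I. Y l \<in> carrier_mat n n"
    and Z: "Z \<in> carrier_mat n n" and ZY: "\<forall>i<n. \<forall>j<n. Z $$ (i,j) = (\<Sum>l\<in>I. c l * Y l $$ (i,j))"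
  shows "mtrace (X * Z) = (\<Sum>l\<in>I. c l * mtrace (X * Y l))"
proof -
  have "mtrace (X * Z) = (\<Sum>i<n. \<Sum>t<n. \<Sum>l\<in>I. c l * (X $$ (i,t) * Y l $$ (t,i)))"
    using X Z ZY by (simp add: mtrace_mult_eq_sum sum_distrib_left mult_ac)
  also have "\<dots> = (\<Sum>l\<in>I. \<Sum>i<n. \<Sum>t<n. c l * (X $$ (i,t) * Y l $$ (t,i)))"
    by (simp add: sum.swap[of _ I])
  also have "\<dots> = (\<Sum>l\<in>I. c l * mtrace (X * Y l))"
    using X Y by (intro sum.cong refl) (simp add: mtrace_mult_eq_sum sum_distrib_left)
  finally show ?thesis .
qed

lemma minv_eqI:
  assumes A: "A \<in> carrier_mat n n" and B: "B \<in> carrier_mat n n"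
    and AB: "A * B = 1\<^sub>m n" and BA: "B * A = 1\<^sub>m n"
  shows "minv A = B"
proof -
  have "\<exists>B. B \<in> carrier_mat (dim_row A) (dim_row A) \<and> inverts_mat A B \<and> inverts_mat B A"
    using assms by (intro exI[of _ B]) (auto simp: inverts_mat_def)
  then have "minv A \<in> carrier_mat (dim_row A) (dim_row A) \<and> inverts_mat A (minv A)"
    unfolding minv_def by (rule someI2_ex) blast
  then have M: "minv A \<in> carrier_mat n n" "A * minv A = 1\<^sub>m n"
    using A by (simp_all add: inverts_mat_def)
  have "minv A = (B * A) * minv A" using M by (simp add: BA)
  also have "\<dots> = B * (A * minv A)" using A B M by (simp add: assoc_mult_mat)
  also have "\<dots> = B" using B M by simp
  finally show ?thesis .
qed

lemma msum_index[simp]: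
  "i < n \<Longrightarrow> j < n \<Longrightarrow> msum n f I $$ (i,j) = (\<Sum>l\<in>I. f l $$ (i,j))"
  by (simp add: msum_def)

lemma msum_carrier[simp]: "msum n f I \<in> carrier_mat n n"
  by (simp add: msum_def)

lemma msum_dim[simp]: "dim_row (msum n f I) = n" "dim_col (msum n f I) = n"
  by (simp_all add: msum_def)

lemma msum_cong: "(\<And>l. l \<in> I \<Longrightarrow> f l = g l) \<Longrightarrow> msum n f I = msum n g I"
  by (simp add: msum_def)

lemma msum_smult_index:
  assumes "\<forall>l\<in>I. P l \<in> carrier_mat n n" "i < n" "j < n"
  shows "msum n (\<lambda>l. a l \<cdot>\<^sub>m P l) I $$ (i,j) = (\<Sum>l\<in>I. a l * P l $$ (i,j))"
  using assms by (auto intro!: sum.cong)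

lemma smult_msum:
  assumes "\<forall>l\<in>I. P l \<in> carrier_mat n n"
  shows "c \<cdot>\<^sub>m msum n (\<lambda>l. a l \<cdot>\<^sub>m P l) I = msum n (\<lambda>l. (c * a l) \<cdot>\<^sub>m P l) I"
  using assms
  by (intro eq_matI) (auto simp: msum_smult_index sum_distrib_left mult_ac simp del: msum_index)

lemma mtrace_msum:
  assumes "\<forall>l\<in>I. P l \<in> carrier_mat n n"
  shows "mtrace (msum n (\<lambda>l. a l \<cdot>\<^sub>m P l) I) = (\<Sum>l\<in>I. a l * mtrace (P l))"
  using assms
  by (auto simp: mtrace_def msum_smult_index sum.swap[of _ I] sum_distrib_left
      simp del: msum_index intro!: sum.cong)

definition orthogonal_idempotents :: "nat \<Rightarrow> nat \<Rightarrow> (nat \<Rightarrow> complex mat) \<Rightarrow> bool" where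
  "orthogonal_idempotents n m P \<longleftrightarrow>
     (\<forall>l<m. P l \<in> carrier_mat n n \<and> P l * P l = P l) \<and>
     (\<forall>l<m. \<forall>l'<m. l \<noteq> l' \<longrightarrow> P l * P l' = 0\<^sub>m n n)"

lemma spectral_decompD:
  assumes "spectral_decomp n H m E P"
  shows "H = msum n (\<lambda>l. complex_of_real (E l) \<cdot>\<^sub>m P l) {..<m}"
    and "\<forall>l<m. P l \<in> carrier_mat n n"
    and "orthogonal_idempotents n m P"
    and "msum n P {..<m} = 1\<^sub>m n"
  using assms unfolding spectral_decomp_def orthogonal_idempotents_def by auto

lemma orthogonal_idempotents_msum_mult:
  assumes "orthogonal_idempotents n m P"
  shows "msum n (\<lambda>l. a l \<cdot>\<^sub>m P l) {..<m} * msum n (\<lambda>l. b l \<cdot>\<^sub>m P l) {..<m}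
       = msum n (\<lambda>l. (a l * b l) \<cdot>\<^sub>m P l) {..<m}"
proof (rule eq_matI)
  fix i j assume "i < dim_row (msum n (\<lambda>l. (a l * b l) \<cdot>\<^sub>m P l) {..<m})"
    "j < dim_col (msum n (\<lambda>l. (a l * b l) \<cdot>\<^sub>m P l) {..<m})"
  then have i: "i < n" and j: "j < n" by simp_all
  have P: "\<forall>l\<in>{..<m}. P l \<in> carrier_mat n n" using assms by (auto simp: orthogonal_idempotents_def)
  have PP: "(\<Sum>t<n. P l $$ (i,t) * P l' $$ (t,j)) = (if l' = l then P l $$ (i,j) else 0)"
    if "l < m" "l' < m" for l l'
    using assms that i j
    by (auto simp: orthogonal_idempotents_def simp flip: index_mult_mat_sum[of "P l" n n "P l'" n])
  have "(msum n (\<lambda>l. a l \<cdot>\<^sub>m P l) {..<m} * msum n (\<lambda>l. b l \<cdot>\<^sub>m P l) {..<m}) $$ (i,j)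
      = (\<Sum>t<n. (\<Sum>l<m. a l * P l $$ (i,t)) * (\<Sum>l'<m. b l' * P l' $$ (t,j)))"
    using i j P
    by (subst index_mult_mat_sum[of _ n n _ n]) (auto simp: msum_smult_index simp del: msum_index intro!: sum.cong)
  also have "\<dots> = (\<Sum>t<n. \<Sum>l<m. \<Sum>l'<m. a l * b l' * (P l $$ (i,t) * P l' $$ (t,j)))"
    by (simp add: sum_product mult_ac)
  also have "\<dots> = (\<Sum>l<m. \<Sum>l'<m. \<Sum>t<n. a l * b l' * (P l $$ (i,t) * P l' $$ (t,j)))"
    by (subst sum.swap) (simp add: sum.swap[of _ "{..<n}"])
  also have "\<dots> = (\<Sum>l<m. \<Sum>l'<m. a l * b l' * (\<Sum>t<n. P l $$ (i,t) * P l' $$ (t,j)))"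
    by (simp add: sum_distrib_left)
  also have "\<dots> = (\<Sum>l<m. (a l * b l) * P l $$ (i,j))"
    by (simp add: PP if_distrib cong: if_cong)
  also have "\<dots> = msum n (\<lambda>l. (a l * b l) \<cdot>\<^sub>m P l) {..<m} $$ (i,j)"
    using P i j by (simp add: msum_smult_index del: msum_index)
  finally show "(msum n (\<lambda>l. a l \<cdot>\<^sub>m P l) {..<m} * msum n (\<lambda>l. b l \<cdot>\<^sub>m P l) {..<m}) $$ (i,j)
       = msum n (\<lambda>l. (a l * b l) \<cdot>\<^sub>m P l) {..<m} $$ (i,j)" .
qed (simp_all add: msum_def)

lemma orthogonal_idempotents_msum_power:
  assumes P: "orthogonal_idempotents n m P" and one: "msum n P {..<m} = 1\<^sub>m n"
  shows "msum n (\<lambda>l. a l \<cdot>\<^sub>m P l) {..<m} ^\<^sub>m k = msum n (\<lambda>l. a l ^ k \<cdot>\<^sub>m P l) {..<m}"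
proof (induction k)
  case 0
  show ?case using one by (simp add: smult_one_mat)
next
  case (Suc k)
  then show ?case
    by (simp add: orthogonal_idempotents_msum_mult[OF P] power_Suc2 mult.commute)
qed

lemma orthogonal_idempotents_msum_inverse:
  assumes "orthogonal_idempotents n m P" and "msum n P {..<m} = 1\<^sub>m n" and "\<forall>l<m. a l * b l = 1"
  shows "msum n (\<lambda>l. a l \<cdot>\<^sub>m P l) {..<m} * msum n (\<lambda>l. b l \<cdot>\<^sub>m P l) {..<m} = 1\<^sub>m n"
proof -
  have "msum n (\<lambda>l. (a l * b l) \<cdot>\<^sub>m P l) {..<m} = msum n P {..<m}"
    using assms(3) by (intro msum_cong) (simp add: smult_one_mat)
  then show ?thesis
    using assms(1,2) by (simp add: orthogonal_idempotents_msum_mult)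
qed

lemma mat_exp_spectral_decomp:
  assumes S: "spectral_decomp n H m E P"
  shows "mat_exp (complex_of_real x \<cdot>\<^sub>m H) = msum n (\<lambda>l. complex_of_real (exp (x * E l)) \<cdot>\<^sub>m P l) {..<m}"
proof -
  note P = spectral_decompD(2-4)[OF S]
  define a where "a l = complex_of_real x * complex_of_real (E l)" for l
  have xH: "complex_of_real x \<cdot>\<^sub>m H = msum n (\<lambda>l. a l \<cdot>\<^sub>m P l) {..<m}"
    unfolding a_def spectral_decompD(1)[OF S] using P(1) by (simp add: smult_msum)
  have "(\<lambda>k. P l $$ (i,j) * (a l ^ k / of_nat (fact k))) sums (P l $$ (i,j) * exp (a l))" for l i j
    using exp_converges[of "a l"] by (intro sums_mult) (simp add: scaleR_conv_of_real divide_inverse mult.commute)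
  then have exp_series: "(\<lambda>k. \<Sum>l<m. P l $$ (i,j) * (a l ^ k / of_nat (fact k))) sums (\<Sum>l<m. P l $$ (i,j) * exp (a l))"
    for i j by (intro sums_sum)
  show ?thesis
  proof (rule eq_matI)
    fix i j assume "i < dim_row (msum n (\<lambda>l. complex_of_real (exp (x * E l)) \<cdot>\<^sub>m P l) {..<m})"
      "j < dim_col (msum n (\<lambda>l. complex_of_real (exp (x * E l)) \<cdot>\<^sub>m P l) {..<m})"
    then have i: "i < n" and j: "j < n" by simp_all
    have "mat_exp (complex_of_real x \<cdot>\<^sub>m H) $$ (i,j)
        = (\<Sum>k. \<Sum>l<m. P l $$ (i,j) * (a l ^ k / of_nat (fact k)))"
      using i j P(1)
      by (simp add: xH mat_exp_def orthogonal_idempotents_msum_power[OF P(2,3)] msum_smult_index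
          sum_divide_distrib mult_ac del: msum_index of_nat_fact)
    also have "\<dots> = (\<Sum>l<m. P l $$ (i,j) * exp (a l))"
      using exp_series by (rule sums_unique[symmetric])
    also have "\<dots> = msum n (\<lambda>l. complex_of_real (exp (x * E l)) \<cdot>\<^sub>m P l) {..<m} $$ (i,j)"
      using i j P(1)
      by (simp add: msum_smult_index a_def exp_of_real[symmetric] mult_ac del: msum_index)
    finally show "mat_exp (complex_of_real x \<cdot>\<^sub>m H) $$ (i,j)
        = msum n (\<lambda>l. complex_of_real (exp (x * E l)) \<cdot>\<^sub>m P l) {..<m} $$ (i,j)" .
  qed (use spectral_decompD(1)[OF S] in \<open>simp_all add: mat_exp_def msum_def\<close>)
qed

lemma mtrace_hermitian_idempotent:
  assumes "P \<in> carrier_mat n n" "hermitian P" "P * P = P"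
  shows "mtrace P = complex_of_real (\<Sum>i<n. \<Sum>t<n. (cmod (P $$ (i,t)))\<^sup>2)"
proof -
  have herm: "P $$ (t,i) = cnj (P $$ (i,t))" if "i < n" "t < n" for i t
    using assms(2) that carrier_matD(1)[OF assms(1)] unfolding hermitian_def by blast
  have "mtrace P = mtrace (P * P)" using assms(3) by simp
  also have "\<dots> = (\<Sum>i<n. \<Sum>t<n. P $$ (i,t) * P $$ (t,i))"
    by (rule mtrace_mult_eq_sum[OF assms(1) assms(1)])
  also have "\<dots> = (\<Sum>i<n. \<Sum>t<n. complex_of_real ((cmod (P $$ (i,t)))\<^sup>2))"
  proof (intro sum.cong refl)
    fix i t assume "i \<in> {..<n}" "t \<in> {..<n}"
    then have "P $$ (i,t) * P $$ (t,i) = P $$ (i,t) * cnj (P $$ (i,t))"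
      using herm[of i t] by simp
    then show "P $$ (i,t) * P $$ (t,i) = complex_of_real ((cmod (P $$ (i,t)))\<^sup>2)"
      by (simp only: complex_norm_square)
  qed
  finally show ?thesis by simp
qed

lemma mtrace_projector_pos:
  assumes P: "P \<in> carrier_mat n n" "hermitian P" "P * P = P" and nz: "P \<noteq> 0\<^sub>m n n"
  shows "\<exists>r>0. mtrace P = complex_of_real r"
proof -
  obtain i0 t0 where it: "i0 < n" "t0 < n" "P $$ (i0,t0) \<noteq> 0"
  proof (rule ccontr)
    assume "\<not> thesis"
    then have "P = 0\<^sub>m n n" using that P(1) by (intro eq_matI) auto
    then show False using nz by simp
  qed
  have "0 < (\<Sum>t<n. (cmod (P $$ (i0,t)))\<^sup>2)"
    using it by (intro sum_pos2[of _ t0]) auto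
  then have "0 < (\<Sum>i<n. \<Sum>t<n. (cmod (P $$ (i,t)))\<^sup>2)"
    using it by (intro sum_pos2[where f = "\<lambda>i. \<Sum>t<n. (cmod (P $$ (i,t)))\<^sup>2" and i = i0])
      (auto intro: sum_nonneg)
  then show ?thesis using mtrace_hermitian_idempotent[OF P] by blast
qed

lemma spectral_decomp_nonempty:
  assumes "spectral_decomp n H m E P" and "n \<ge> 1"
  shows "m > 0"
proof (rule ccontr)
  assume "\<not> m > 0"
  then have "msum n P {..<m} $$ (0,0) = 0" using assms(2) by simp
  then show False using spectral_decompD(4)[OF assms(1)] assms(2) by simp
qed

lemma partition_fn_pos:
  assumes S: "spectral_decomp n H m E P" and n: "n \<ge> 1"
  shows "partition_fn \<beta> H > 0"
proof -
  have "\<forall>l\<in>{..<m}. \<exists>r>0. mtrace (P l) = complex_of_real r"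
    using S unfolding spectral_decomp_def by (auto intro!: mtrace_projector_pos)
  then obtain r where "\<forall>l\<in>{..<m}. r l > 0 \<and> mtrace (P l) = complex_of_real (r l)"
    by (auto dest!: bchoice)
  then have r: "\<And>l. l \<in> {..<m} \<Longrightarrow> r l > 0 \<and> mtrace (P l) = complex_of_real (r l)"
    by blast
  have P: "\<forall>l\<in>{..<m}. P l \<in> carrier_mat n n" using spectral_decompD(2)[OF S] by simp
  have "partition_fn \<beta> H = Re (\<Sum>l<m. complex_of_real (exp (-\<beta> * E l)) * mtrace (P l))"
    unfolding partition_fn_def mat_exp_spectral_decomp[OF S] mtrace_msum[OF P] ..
  also have "\<dots> = (\<Sum>l<m. exp (-\<beta> * E l) * r l)"
    using r by (simp add: Re_sum)
  also have "\<dots> > 0"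
    using spectral_decomp_nonempty[OF S n] r by (intro sum_pos2[of _ 0]) (auto intro: less_imp_le)
  finally show ?thesis .
qed

lemma gibbs_spectral_decomp:
  assumes S: "spectral_decomp n H m E P"
  shows "gibbs \<beta> H = msum n (\<lambda>l. complex_of_real (exp (-\<beta> * E l) / partition_fn \<beta> H) \<cdot>\<^sub>m P l) {..<m}"
proof -
  have P: "\<forall>l\<in>{..<m}. P l \<in> carrier_mat n n" using spectral_decompD(2)[OF S] by simp
  show ?thesis unfolding gibbs_def mat_exp_spectral_decomp[OF S] smult_msum[OF P]
    by (intro msum_cong) (simp add: divide_inverse mult.commute)
qed

lemma gibbs_carrier: "spectral_decomp n H m E P \<Longrightarrow> gibbs \<beta> H \<in> carrier_mat n n"
  by (simp add: gibbs_spectral_decomp)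

lemma gibbs_inverse:
  fixes \<beta> :: real
  assumes S: "spectral_decomp n H m E P" and n: "n \<ge> 1"
  defines "G \<equiv> msum n (\<lambda>l. complex_of_real (partition_fn \<beta> H * exp (\<beta> * E l)) \<cdot>\<^sub>m P l) {..<m}"
  shows "gibbs \<beta> H * G = 1\<^sub>m n" and "G * gibbs \<beta> H = 1\<^sub>m n"
proof -
  have "partition_fn \<beta> H \<noteq> 0" using partition_fn_pos[OF S n, where \<beta> = \<beta>] by simp
  then have "\<forall>l<m. complex_of_real (exp (-\<beta> * E l) / partition_fn \<beta> H)
      * complex_of_real (partition_fn \<beta> H * exp (\<beta> * E l)) = 1"
    by (simp flip: of_real_mult add: exp_minus field_simps)
  then show "gibbs \<beta> H * G = 1\<^sub>m n" and "G * gibbs \<beta> H = 1\<^sub>m n"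
    unfolding G_def gibbs_spectral_decomp[OF S]
    by (auto intro!: orthogonal_idempotents_msum_inverse[OF spectral_decompD(3,4)[OF S]] simp: mult.commute)
qed

lemma div_mod_less_of_less_mult:
  assumes "i < a * (b::nat)"
  shows "i div b < a" and "i mod b < b"
  using assms by (auto simp: less_mult_imp_div_less) (metis mod_less_divisor mult_0_right not_less0 gr0I)

lemma sum_lessThan_mult_div_mod:
  "(\<Sum>t<a*b. f (t div b) (t mod b)) = (\<Sum>s<a. \<Sum>r<b. f s (r::nat))"
proof -
  have bound: "s*b + r < a*b" if "s < a" "r < b" for s r
  proof -
    have "s*b + r < (s+1)*b" using that by simp
    also have "\<dots> \<le> a*b" using that by (intro mult_le_mono1) simp
    finally show ?thesis .
  qed
  have "(\<Sum>t<a*b. f (t div b) (t mod b)) = (\<Sum>(s,r)\<in>{..<a} \<times> {..<b}. f s r)"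
    by (rule sum.reindex_bij_witness[where i = "\<lambda>(s,r). s*b + r" and j = "\<lambda>t. (t div b, t mod b)"])
      (auto simp: bound div_mod_less_of_less_mult)
  then show ?thesis by (simp add: sum.cartesian_product)
qed

lemma kron_carrier:
  "A \<in> carrier_mat a a \<Longrightarrow> B \<in> carrier_mat b b \<Longrightarrow> kron A B \<in> carrier_mat (a*b) (a*b)"
  by (auto simp: kron_def)

lemma kron_index:
  assumes "A \<in> carrier_mat a a" "B \<in> carrier_mat b b" "i < a*b" "j < a*b"
  shows "kron A B $$ (i,j) = A $$ (i div b, j div b) * B $$ (i mod b, j mod b)"
  using assms by (auto simp: kron_def)

lemma kron_mult:
  assumes A: "A \<in> carrier_mat a a" and C: "C \<in> carrier_mat a a"
    and B: "B \<in> carrier_mat b b" and D: "D \<in> carrier_mat b b"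
  shows "kron A B * kron C D = kron (A*C) (B*D)"
proof (rule eq_matI)
  fix i j assume "i < dim_row (kron (A*C) (B*D))" "j < dim_col (kron (A*C) (B*D))"
  then have i: "i < a*b" and j: "j < a*b" using A B C D by (simp_all add: kron_def)
  note ij = div_mod_less_of_less_mult[OF i] div_mod_less_of_less_mult[OF j]
  have "(kron A B * kron C D) $$ (i,j) = (\<Sum>t<a*b. kron A B $$ (i,t) * kron C D $$ (t,j))"
    by (rule index_mult_mat_sum[OF kron_carrier[OF A B] kron_carrier[OF C D] i j])
  also have "\<dots> = (\<Sum>t<a*b. (A $$ (i div b, t div b) * C $$ (t div b, j div b))
      * (B $$ (i mod b, t mod b) * D $$ (t mod b, j mod b)))"
    using assms i j by (intro sum.cong refl) (simp add: kron_index mult_ac)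
  also have "\<dots> = (\<Sum>s<a. \<Sum>r<b. (A $$ (i div b, s) * C $$ (s, j div b)) * (B $$ (i mod b, r) * D $$ (r, j mod b)))"
    by (rule sum_lessThan_mult_div_mod)
  also have "\<dots> = (\<Sum>s<a. A $$ (i div b, s) * C $$ (s, j div b)) * (\<Sum>r<b. B $$ (i mod b, r) * D $$ (r, j mod b))"
    by (simp add: sum_product)
  also have "\<dots> = kron (A*C) (B*D) $$ (i,j)"
    using assms i j ij by (simp add: kron_index[of _ a _ b] index_mult_mat_sum[of _ a a _ a]
        index_mult_mat_sum[of _ b b _ b] del: index_mult_mat)
  finally show "(kron A B * kron C D) $$ (i,j) = kron (A*C) (B*D) $$ (i,j)" .
qed (use A B C D in \<open>simp_all add: kron_def\<close>)

lemma kron_one_mat: "kron (1\<^sub>m a) (1\<^sub>m b) = 1\<^sub>m (a*b)"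
proof (rule eq_matI)
  fix i j assume "i < dim_row (1\<^sub>m (a*b))" "j < dim_col (1\<^sub>m (a*b))"
  then have i: "i < a*b" and j: "j < a*b" by auto
  have "(i div b = j div b \<and> i mod b = j mod b) \<longleftrightarrow> i = j"
    by (metis div_mult_mod_eq)
  then show "kron (1\<^sub>m a) (1\<^sub>m b) $$ (i,j) = 1\<^sub>m (a*b) $$ (i,j)"
    using i j div_mod_less_of_less_mult[OF i] div_mod_less_of_less_mult[OF j]
    by (auto simp: kron_index[of _ a _ b])
qed (simp_all add: kron_def)

lemma minv_kron:
  assumes "A \<in> carrier_mat a a" "A' \<in> carrier_mat a a" "A * A' = 1\<^sub>m a" "A' * A = 1\<^sub>m a"
    and "B \<in> carrier_mat b b" "B' \<in> carrier_mat b b" "B * B' = 1\<^sub>m b" "B' * B = 1\<^sub>m b"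
  shows "minv (kron A B) = kron A' B'"
  using assms by (intro minv_eqI) (simp_all add: kron_carrier kron_mult kron_one_mat)

lemma kron_msum_index:
  assumes PA: "\<forall>l<mA. PA l \<in> carrier_mat a a" and PB: "\<forall>l<mB. PB l \<in> carrier_mat b b"
    and i: "i < a*b" and j: "j < a*b"
  shows "kron (msum a (\<lambda>l. cA l \<cdot>\<^sub>m PA l) {..<mA}) (msum b (\<lambda>l. cB l \<cdot>\<^sub>m PB l) {..<mB}) $$ (i,j)
       = (\<Sum>p\<in>{..<mA}\<times>{..<mB}. (cA (fst p) * cB (snd p)) * kron (PA (fst p)) (PB (snd p)) $$ (i,j))"
proof -
  note ij = div_mod_less_of_less_mult[OF i] div_mod_less_of_less_mult[OF j]
  have PA': "\<forall>l\<in>{..<mA}. PA l \<in> carrier_mat a a" and PB': "\<forall>l\<in>{..<mB}. PB l \<in> carrier_mat b b"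
    using PA PB by auto
  have "kron (msum a (\<lambda>l. cA l \<cdot>\<^sub>m PA l) {..<mA}) (msum b (\<lambda>l. cB l \<cdot>\<^sub>m PB l) {..<mB}) $$ (i,j)
     = (\<Sum>l<mA. cA l * PA l $$ (i div b, j div b)) * (\<Sum>l<mB. cB l * PB l $$ (i mod b, j mod b))"
    using i j ij
    by (simp add: kron_index[of _ a _ b] msum_smult_index[OF PA'] msum_smult_index[OF PB'] del: msum_index)
  also have "\<dots> = (\<Sum>p\<in>{..<mA}\<times>{..<mB}. (cA (fst p) * PA (fst p) $$ (i div b, j div b))
      * (cB (snd p) * PB (snd p) $$ (i mod b, j mod b)))"
    by (simp add: sum_product sum.cartesian_product split_def)
  also have "\<dots> = (\<Sum>p\<in>{..<mA}\<times>{..<mB}. (cA (fst p) * cB (snd p)) * kron (PA (fst p)) (PB (snd p)) $$ (i,j))"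
    using PA PB i j by (intro sum.cong refl) (auto simp: kron_index[of _ a _ b] mult_ac)
  finally show ?thesis .
qed

lemma mtrace_mult_kron_msum:
  assumes X: "X \<in> carrier_mat (a*b) (a*b)"
    and PA: "\<forall>l<mA. PA l \<in> carrier_mat a a" and PB: "\<forall>l<mB. PB l \<in> carrier_mat b b"
  shows "mtrace (X * kron (msum a (\<lambda>l. cA l \<cdot>\<^sub>m PA l) {..<mA}) (msum b (\<lambda>l. cB l \<cdot>\<^sub>m PB l) {..<mB}))
     = (\<Sum>lA<mA. \<Sum>lB<mB. cA lA * cB lB * mtrace (X * kron (PA lA) (PB lB)))"
proof -
  have "mtrace (X * kron (msum a (\<lambda>l. cA l \<cdot>\<^sub>m PA l) {..<mA}) (msum b (\<lambda>l. cB l \<cdot>\<^sub>m PB l) {..<mB}))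
     = (\<Sum>p\<in>{..<mA}\<times>{..<mB}. (cA (fst p) * cB (snd p)) * mtrace (X * kron (PA (fst p)) (PB (snd p))))"
    using PA PB by (intro mtrace_mult_lincomb[OF X]) (auto intro: kron_carrier kron_msum_index)
  then show ?thesis by (simp add: sum.cartesian_product split_def)
qed

lemma CPTP_carrier: "CPTP d \<Phi> \<Longrightarrow> X \<in> carrier_mat d d \<Longrightarrow> \<Phi> X \<in> carrier_mat d d"
  by (simp add: CPTP_def)

lemma CPTP_add:
  assumes "CPTP d \<Phi>" "X \<in> carrier_mat d d" "Y \<in> carrier_mat d d"
  shows "\<Phi> (X + Y) = \<Phi> X + \<Phi> Y"
proof -
  have "\<Phi> (1 \<cdot>\<^sub>m X + Y) = 1 \<cdot>\<^sub>m \<Phi> X + \<Phi> Y"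
    using assms unfolding CPTP_def by blast
  then show ?thesis by (simp add: smult_one_mat)
qed

lemma exp_free_energy_split:
  fixes \<beta> Zi Zi' Zf Zf' a b c d :: real
  assumes "\<beta> \<noteq> 0" "Zi > 0" "Zi' > 0" "Zf > 0" "Zf' > 0"
  shows "exp (- \<beta> * ((c + d - a - b) - (- (1 / \<beta>) * ln ((Zf * Zf') / (Zi * Zi')))))
     = (Zi * exp (\<beta> * a)) * (Zi' * exp (\<beta> * b)) * ((exp (- \<beta> * c) / Zf) * (exp (- \<beta> * d) / Zf'))"
proof -
  define R where "R = (Zf * Zf') / (Zi * Zi')"
  have R: "R > 0" using assms by (simp add: R_def)
  have "- \<beta> * ((c + d - a - b) - (- (1 / \<beta>) * ln R)) = \<beta> * a + \<beta> * b + (- \<beta> * c) + (- \<beta> * d) - ln R"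
    using assms by (simp add: field_simps)
  then have "exp (- \<beta> * ((c + d - a - b) - (- (1 / \<beta>) * ln R)))
      = exp (\<beta> * a) * exp (\<beta> * b) * exp (- \<beta> * c) * exp (- \<beta> * d) / R"
    using R by (simp add: exp_add exp_diff exp_minus field_simps)
  also have "\<dots> = (Zi * exp (\<beta> * a)) * (Zi' * exp (\<beta> * b)) * ((exp (- \<beta> * c) / Zf) * (exp (- \<beta> * d) / Zf'))"
    using assms by (simp add: R_def field_simps)
  finally show ?thesis by (simp add: R_def)
qed

lemma epm_avg_factor:
  assumes \<rho>: "\<rho> \<in> carrier_mat (dA*dB) (dA*dB)" and \<Phi>\<rho>: "\<Phi> \<rho> \<in> carrier_mat (dA*dB) (dA*dB)"
    and PiA: "\<forall>l<miA. PiA l \<in> carrier_mat dA dA" and PiB: "\<forall>l<miB. PiB l \<in> carrier_mat dB dB"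
    and PfA: "\<forall>l<mfA. PfA l \<in> carrier_mat dA dA" and PfB: "\<forall>l<mfB. PfB l \<in> carrier_mat dB dB"
    and g: "\<And>lA lB kA kB. complex_of_real (g (EfA kA + EfB kB - EiA lA - EiB lB))
              = uA lA * uB lB * (wA kA * wB kB)"
  shows "epm_avg \<rho> \<Phi> miA EiA PiA miB EiB PiB mfA EfA PfA mfB EfB PfB g
     = mtrace (\<rho> * kron (msum dA (\<lambda>l. uA l \<cdot>\<^sub>m PiA l) {..<miA}) (msum dB (\<lambda>l. uB l \<cdot>\<^sub>m PiB l) {..<miB}))
     * mtrace (\<Phi> \<rho> * kron (msum dA (\<lambda>l. wA l \<cdot>\<^sub>m PfA l) {..<mfA}) (msum dB (\<lambda>l. wB l \<cdot>\<^sub>m PfB l) {..<mfB}))"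
proof -
  have "epm_avg \<rho> \<Phi> miA EiA PiA miB EiB PiB mfA EfA PfA mfB EfB PfB g
     = (\<Sum>lA<miA. \<Sum>lB<miB. \<Sum>kA<mfA. \<Sum>kB<mfB.
          (uA lA * uB lB * mtrace (\<rho> * kron (PiA lA) (PiB lB)))
          * (wA kA * wB kB * mtrace (\<Phi> \<rho> * kron (PfA kA) (PfB kB))))"
    unfolding epm_avg_def g by (simp add: mult_ac)
  also have "\<dots> = (\<Sum>lA<miA. \<Sum>lB<miB. uA lA * uB lB * mtrace (\<rho> * kron (PiA lA) (PiB lB)))
     * (\<Sum>kA<mfA. \<Sum>kB<mfB. wA kA * wB kB * mtrace (\<Phi> \<rho> * kron (PfA kA) (PfB kB)))"
    by (simp only: sum_distrib_right) (simp only: sum_distrib_left)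
  also have "\<dots> = mtrace (\<rho> * kron (msum dA (\<lambda>l. uA l \<cdot>\<^sub>m PiA l) {..<miA}) (msum dB (\<lambda>l. uB l \<cdot>\<^sub>m PiB l) {..<miB}))
     * mtrace (\<Phi> \<rho> * kron (msum dA (\<lambda>l. wA l \<cdot>\<^sub>m PfA l) {..<mfA}) (msum dB (\<lambda>l. wB l \<cdot>\<^sub>m PfB l) {..<mfB}))"
    by (simp only: mtrace_mult_kron_msum[OF \<rho> PiA PiB] mtrace_mult_kron_msum[OF \<Phi>\<rho> PfA PfB])
  finally show ?thesis .
qed

lemma minv_kron_gibbs:
  fixes \<beta> :: real
  assumes SA: "spectral_decomp dA HA mA EA PA" and dA: "dA \<ge> 1"
    and SB: "spectral_decomp dB HB mB EB PB" and dB: "dB \<ge> 1"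
  shows "minv (kron (gibbs \<beta> HA) (gibbs \<beta> HB))
       = kron (msum dA (\<lambda>l. complex_of_real (partition_fn \<beta> HA * exp (\<beta> * EA l)) \<cdot>\<^sub>m PA l) {..<mA})
              (msum dB (\<lambda>l. complex_of_real (partition_fn \<beta> HB * exp (\<beta> * EB l)) \<cdot>\<^sub>m PB l) {..<mB})"
  by (rule minv_kron[OF gibbs_carrier[OF SA] msum_carrier gibbs_inverse[OF SA dA]
        gibbs_carrier[OF SB] msum_carrier gibbs_inverse[OF SB dB]])

lemma kron_gibbs_invertible:
  fixes \<beta> :: real
  assumes SA: "spectral_decomp dA HA mA EA PA" and dA: "dA \<ge> 1"
    and SB: "spectral_decomp dB HB mB EB PB" and dB: "dB \<ge> 1"
  shows "minv (kron (gibbs \<beta> HA) (gibbs \<beta> HB)) \<in> carrier_mat (dA * dB) (dA * dB)"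
    and "kron (gibbs \<beta> HA) (gibbs \<beta> HB) * minv (kron (gibbs \<beta> HA) (gibbs \<beta> HB)) = 1\<^sub>m (dA * dB)"
  unfolding minv_kron_gibbs[OF assms]
  by (simp add: kron_carrier)
    (simp only: kron_mult[OF gibbs_carrier[OF SA] msum_carrier gibbs_carrier[OF SB] msum_carrier]
      gibbs_inverse(1)[OF SA dA] gibbs_inverse(1)[OF SB dB] kron_one_mat)

lemma epm_avg_exp_free_energy:
  fixes \<beta> :: real
  assumes "dA \<ge> 1" "dB \<ge> 1" "\<beta> \<noteq> 0"
    and SiA: "spectral_decomp dA HiA miA EiA PiA" and SiB: "spectral_decomp dB HiB miB EiB PiB"
    and SfA: "spectral_decomp dA HfA mfA EfA PfA" and SfB: "spectral_decomp dB HfB mfB EfB PfB"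
    and \<rho>: "\<rho> \<in> carrier_mat (dA*dB) (dA*dB)" and \<Phi>\<rho>: "\<Phi> \<rho> \<in> carrier_mat (dA*dB) (dA*dB)"
  defines "\<Delta>F \<equiv> - (1 / \<beta>) * ln ((partition_fn \<beta> HfA * partition_fn \<beta> HfB)
                                 / (partition_fn \<beta> HiA * partition_fn \<beta> HiB))"
  shows "epm_avg \<rho> \<Phi> miA EiA PiA miB EiB PiB mfA EfA PfA mfB EfB PfB (\<lambda>\<Delta>E. exp (- \<beta> * (\<Delta>E - \<Delta>F)))
       = mtrace (\<rho> * minv (kron (gibbs \<beta> HiA) (gibbs \<beta> HiB)))
         * mtrace (\<Phi> \<rho> * kron (gibbs \<beta> HfA) (gibbs \<beta> HfB))"
proof -
  have split: "complex_of_real (exp (- \<beta> * ((EfA kA + EfB kB - EiA lA - EiB lB) - \<Delta>F)))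
      = complex_of_real (partition_fn \<beta> HiA * exp (\<beta> * EiA lA))
        * complex_of_real (partition_fn \<beta> HiB * exp (\<beta> * EiB lB))
        * (complex_of_real (exp (- \<beta> * EfA kA) / partition_fn \<beta> HfA)
           * complex_of_real (exp (- \<beta> * EfB kB) / partition_fn \<beta> HfB))" for lA lB kA kB
    unfolding \<Delta>F_def
    by (simp only: exp_free_energy_split[OF \<open>\<beta> \<noteq> 0\<close> partition_fn_pos[OF SiA assms(1)]
        partition_fn_pos[OF SiB assms(2)] partition_fn_pos[OF SfA assms(1)] partition_fn_pos[OF SfB assms(2)]]
        of_real_mult[symmetric])
  show ?thesis
    unfolding minv_kron_gibbs[OF SiA assms(1) SiB assms(2)]
      gibbs_spectral_decomp[OF SfA] gibbs_spectral_decomp[OF SfB]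
    by (rule epm_avg_factor[where \<Phi> = \<Phi>, OF \<rho> \<Phi>\<rho> spectral_decompD(2)[OF SiA] spectral_decompD(2)[OF SiB]
          spectral_decompD(2)[OF SfA] spectral_decompD(2)[OF SfB]])
      (rule split)
qed

theorem mainTheorem5:
  fixes dA dB :: nat and \<beta> :: real
    and HiA HiB HfA HfB :: "complex mat"
    and miA miB mfA mfB :: nat
    and EiA EiB EfA EfB :: "nat \<Rightarrow> real"
    and PiA PiB PfA PfB :: "nat \<Rightarrow> complex mat"
    and \<Phi> :: "complex mat \<Rightarrow> complex mat"
    and \<E> :: "complex mat"
  assumes "dA \<ge> 1" and "dB \<ge> 1"
    and "spectral_decomp dA HiA miA EiA PiA"
    and "spectral_decomp dB HiB miB EiB PiB"
    and "spectral_decomp dA HfA mfA EfA PfA"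
    and "spectral_decomp dB HfB mfB EfB PfB"
    and "CPTP (dA * dB) \<Phi>"
    and "\<beta> > 0"
    and "\<E> \<in> carrier_mat (dA * dB) (dA * dB)" and "hermitian \<E>"
    and "ptrace_A dA dB \<E> = 0\<^sub>m dB dB" and "ptrace_B dA dB \<E> = 0\<^sub>m dA dA"
  shows
    "let ZiA = partition_fn \<beta> HiA; ZiB = partition_fn \<beta> HiB;
         ZfA = partition_fn \<beta> HfA; ZfB = partition_fn \<beta> HfB;
         \<gamma>i = kron (gibbs \<beta> HiA) (gibbs \<beta> HiB);
         \<gamma>f = kron (gibbs \<beta> HfA) (gibbs \<beta> HfB);
         \<Delta>F = - (1 / \<beta>) * ln ((ZfA * ZfB) / (ZiA * ZiB));
         \<rho>i = \<gamma>i + \<E>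
     in epm_avg \<rho>i \<Phi> miA EiA PiA miB EiB PiB mfA EfA PfA mfB EfB PfB
          (\<lambda>\<Delta>E. exp (- \<beta> * (\<Delta>E - \<Delta>F)))
        = (of_nat (dA * dB) + mtrace (minv \<gamma>i * \<E>))
          * (mtrace (\<gamma>f * \<Phi> \<gamma>i) + mtrace (\<gamma>f * \<Phi> \<E>))"
proof -
  note dims = assms(1,2) and S = assms(3-6) and \<Phi> = assms(7) and \<E> = assms(9)
  define \<gamma>i where "\<gamma>i = kron (gibbs \<beta> HiA) (gibbs \<beta> HiB)"
  define \<gamma>f where "\<gamma>f = kron (gibbs \<beta> HfA) (gibbs \<beta> HfB)"
  have \<gamma>: "\<gamma>i \<in> carrier_mat (dA*dB) (dA*dB)" "\<gamma>f \<in> carrier_mat (dA*dB) (dA*dB)"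
    unfolding \<gamma>i_def \<gamma>f_def using S by (simp_all add: kron_carrier gibbs_carrier)
  have \<gamma>i_inv: "minv \<gamma>i \<in> carrier_mat (dA*dB) (dA*dB)" "\<gamma>i * minv \<gamma>i = 1\<^sub>m (dA*dB)"
    unfolding \<gamma>i_def by (rule kron_gibbs_invertible[OF S(1) dims(1) S(2) dims(2)])+
  have \<Phi>\<gamma>\<E>: "\<Phi> \<gamma>i \<in> carrier_mat (dA*dB) (dA*dB)" "\<Phi> \<E> \<in> carrier_mat (dA*dB) (dA*dB)"
    using CPTP_carrier[OF \<Phi>] \<gamma> \<E> by simp_all
  have \<rho>: "\<gamma>i + \<E> \<in> carrier_mat (dA*dB) (dA*dB)" "\<Phi> (\<gamma>i + \<E>) \<in> carrier_mat (dA*dB) (dA*dB)"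
    using CPTP_carrier[OF \<Phi>] \<gamma> \<E> by simp_all
  have \<beta>: "\<beta> \<noteq> 0" using assms(8) by simp
  have avg: "epm_avg (\<gamma>i + \<E>) \<Phi> miA EiA PiA miB EiB PiB mfA EfA PfA mfB EfB PfB
          (\<lambda>\<Delta>E. exp (- \<beta> * (\<Delta>E - - (1 / \<beta>) * ln ((partition_fn \<beta> HfA * partition_fn \<beta> HfB)
                                 / (partition_fn \<beta> HiA * partition_fn \<beta> HiB)))))
      = mtrace ((\<gamma>i + \<E>) * minv \<gamma>i) * mtrace (\<Phi> (\<gamma>i + \<E>) * \<gamma>f)"
    unfolding \<gamma>i_def \<gamma>f_def
    by (rule epm_avg_exp_free_energy[where \<Phi> = \<Phi>, OF dims \<beta> S \<rho>[unfolded \<gamma>i_def]])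
  have trace_initial: "mtrace ((\<gamma>i + \<E>) * minv \<gamma>i) = of_nat (dA * dB) + mtrace (minv \<gamma>i * \<E>)"
    using \<gamma> \<gamma>i_inv \<E> by (simp add: mtrace_add_mult mtrace_one_mat mtrace_mult_comm[of \<E>])
  have trace_final: "mtrace (\<Phi> (\<gamma>i + \<E>) * \<gamma>f) = mtrace (\<gamma>f * \<Phi> \<gamma>i) + mtrace (\<gamma>f * \<Phi> \<E>)"
    using \<gamma> \<Phi>\<gamma>\<E> \<E> by (simp add: CPTP_add[OF \<Phi>] mtrace_add_mult mtrace_mult_comm[of _ _ \<gamma>f])
  show ?thesis
    unfolding Let_def \<gamma>i_def[symmetric] \<gamma>f_def[symmetric] avg trace_initial trace_final ..
qed

end
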